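(* Let $p$ be an odd prime. If $\lambda$ and $\mu$ are self-conjugate partitions with $\mathcal{BG}_p(\lambda)=\mathcal{BG}_p(\mu)$, then $\lambda=\mu$. That is, the BG-symbol gives an injective map from (nonempty) self-conjugate partitions to two-row arrays of positive integers.
   Context: Partitions: $\lambda=(\lambda_1\ge\lambda_2\ge\cdots)$ with finitely many nonzero parts; $l(\lambda)$ is the number of nonzero parts; Young diagram $[\lambda]=\{(i,j): i\ge1, 1\le j\le\lambda_i\}$ ($i$ = row, increasing downward). $\lambda$ is self-conjugate if it equals its conjugate, i.e. $(i,j)\in[\lambda]\iff(j,i)\in[\lambda]$. Rim and $p$-rim: the rim of $\lambda$ is the set of nodes $(i,j)\in[\lambda]$ with $(i+1,j+1)\notin[\lambda]$. Label the rim nodes $1,2,\dots$ consecutively along the rim path from $(1,\lambda_1)$ to $(l(\lambda),1)$ (top-right to bottom-left). The first $p$-segment consists of rim nodes labelled $1,\dots,p$ (or all if fewer). If the last node $(i,j)$ of a $p$-segment lies in the last row, stop; otherwise, with $l$ the smallest label in row $i+1$, the next $p$-segment is the rim nodes labelled $l,\dots,l+p-1$ (or up to the last label). The $p$-rim is the union of the $p$-segments. $p$-rim* and BG-symbol: for a nonempty self-conjugate $\lambda$ let $U_\lambda=\{(i,j)\in p\text{-rim of }\lambda: i\le j\}$, $L_\lambda=\{(j,i):(i,j)\in U_\lambda\}$, $\mathrm{Rim}^*_p(\lambda)=U_\lambda\cup L_\lambda$, $a^*_\lambda=\#\mathrm{Rim}^*_p(\lambda)$, $r^*_\lambda=\#U_\lambda$.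 Put $\lambda^{(0)*}=\lambda$ and $\lambda^{(i)*}=\lambda^{(i-1)*}\setminus\mathrm{Rim}^*_p(\lambda^{(i-1)*})$ (again self-conjugate), with $l$ maximal such that $\lambda^{(l)*}\ne\emptyset$; write $a^*_i=a^*_{\lambda^{(i)*}}$, $r^*_i=r^*_{\lambda^{(i)*}}$. The BG-symbol is $\mathcal{BG}_p(\lambda)=\begin{pmatrix}a^*_0&\cdots&a^*_l\\ r^*_0&\cdots&r^*_l\end{pmatrix}$. *)

theory Defs
  imports Main "HOL-Computational_Algebra.Primes"
begin

definition is_partition :: "nat list \<Rightarrow> bool" where
  "is_partition xs \<longleftrightarrow> sorted_wrt (\<ge>) xs \<and> 0 \<notin> set xs"

text \<open>Young diagram, 1-based (row i, column j).\<close>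
definition diagram :: "nat list \<Rightarrow> (nat \<times> nat) set" where
  "diagram xs = {(i,j). 1 \<le> i \<and> i \<le> length xs \<and> 1 \<le> j \<and> j \<le> xs ! (i - 1)}"

definition transp_diag :: "(nat \<times> nat) set \<Rightarrow> (nat \<times> nat) set" where
  "transp_diag D = {(j,i). (i,j) \<in> D}"

definition self_conjugate :: "nat list \<Rightarrow> bool" where
  "self_conjugate xs \<longleftrightarrow> transp_diag (diagram xs) = diagram xs"

definition nrows :: "(nat \<times> nat) set \<Rightarrow> nat" where
  "nrows D = card {i. (i,1) \<in> D}"

definition rim :: "(nat \<times> nat) set \<Rightarrow> (nat \<times> nat) set" where
  "rim D = {(i,j) \<in> D. (i+1, j+1) \<notin> D}"

text \<open>Rim nodes listed along the rim path from the top-right to the bottom-left: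
  row by row from top to bottom, within a row from right to left.
  The node with label k is the entry at index k-1.\<close>
definition rim_list :: "(nat \<times> nat) set \<Rightarrow> (nat \<times> nat) list" where
  "rim_list D = concat (map (\<lambda>i. map (\<lambda>j. (i,j)) (rev (sorted_list_of_set {j. (i,j) \<in> rim D})))
                  [1..<nrows D + 1])"

text \<open>Indices (0-based labels) of the p-segments, starting at index s.
  The first argument is fuel (number of rows suffices, since each new segment
  starts in a strictly lower row).\<close>
fun pseg_idx :: "nat \<Rightarrow> nat \<Rightarrow> (nat \<times> nat) list \<Rightarrow> nat \<Rightarrow> nat \<Rightarrow> nat set" where
  "pseg_idx 0 p R l s = {}"
| "pseg_idx (Suc f) p R l s =
     (let e = min (s + p - 1) (length R - 1); i = fst (R ! e) in
      {s..e} \<union> (if i = l then {} else pseg_idx f p R l (LEAST k. k < length R \<and> fst (R ! k) = i + 1)))"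

definition p_rim :: "nat \<Rightarrow> (nat \<times> nat) set \<Rightarrow> (nat \<times> nat) set" where
  "p_rim p D = (let R = rim_list D in (\<lambda>k. R ! k) ` pseg_idx (nrows D) p R (nrows D) 0)"

definition U_set :: "nat \<Rightarrow> (nat \<times> nat) set \<Rightarrow> (nat \<times> nat) set" where
  "U_set p D = {(i,j) \<in> p_rim p D. i \<le> j}"

definition rim_star :: "nat \<Rightarrow> (nat \<times> nat) set \<Rightarrow> (nat \<times> nat) set" where
  "rim_star p D = U_set p D \<union> {(j,i). (i,j) \<in> U_set p D}"

text \<open>Successive columns (a*_i, r*_i); fuel = number of nodes suffices since each
  step removes a nonempty set.\<close>
fun bg_aux :: "nat \<Rightarrow> nat \<Rightarrow> (nat \<times> nat) set \<Rightarrow> (nat \<times> nat) list" where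
  "bg_aux 0 p D = []"
| "bg_aux (Suc f) p D =
     (if D = {} then []
      else (card (rim_star p D), card (U_set p D)) # bg_aux f p (D - rim_star p D))"

text \<open>BG-symbol: the two-row array as the list of its columns (a*_i, r*_i), i = 0..l.\<close>
definition BG_symbol :: "nat \<Rightarrow> nat list \<Rightarrow> (nat \<times> nat) list" where
  "BG_symbol p xs = bg_aux (card (diagram xs)) p (diagram xs)"

end

theory Submission
  imports Defs
begin

text \<open>
  Let \<open>\<lambda>\<close> be self-conjugate with Durfee square of size \<open>d\<close>. The part of the p-rim* on or above
  the diagonal consists of the last \<open>k x\<close> cells of each row \<open>x \<le> d\<close>. Following the p-segments
  shows that \<open>k x = \<lambda> x - \<lambda> (x+1) + 1\<close> (the segment swallows the whole rim of row \<open>x\<close>) unless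
  a segment ends in row \<open>x\<close>, and that the rows \<open>1..d\<close> fall into blocks ended by such rows, on
  each of which \<open>k\<close> sums to \<open>p\<close>, except on the last one. Removing the p-rim* leaves the
  self-conjugate diagram with rows \<open>\<mu> x = \<lambda> x - k x\<close>.

  Conversely, the remaining diagram together with \<open>a* = 2 r* - [(d,d) removed]\<close> and \<open>r* mod p\<close>
  determine \<open>d\<close>, \<open>\<mu>\<close> and the size of the last block. Inside a block \<open>\<lambda> (x+1) = \<mu> x + 1\<close>, and
  the block equation \<open>\<lambda> i + j = \<mu> j + i + (block sum)\<close> forces two candidates to have the same
  block starts, hence the same \<open>\<lambda>\<close>. Induction along the columns of the BG-symbol recovers the
  whole diagram.
\<close>

section \<open>Diagrams as sets of cells\<close>

definition is_diagram :: "(nat \<times> nat) set \<Rightarrow> bool" where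
  "is_diagram D \<longleftrightarrow> finite D \<and> (\<forall>i j. (i,j) \<in> D \<longrightarrow> 1 \<le> i \<and> 1 \<le> j) \<and>
     (\<forall>i j i' j'. (i,j) \<in> D \<and> 1 \<le> i' \<and> i' \<le> i \<and> 1 \<le> j' \<and> j' \<le> j \<longrightarrow> (i',j') \<in> D)"

definition row_len :: "(nat \<times> nat) set \<Rightarrow> nat \<Rightarrow> nat" where
  "row_len D i = card {j. (i,j) \<in> D}"

definition durfee :: "(nat \<times> nat) set \<Rightarrow> nat" where
  "durfee D = card {i. (i,i) \<in> D}"

lemma is_diagramI:
  assumes "finite D" and "\<And>i j. (i,j) \<in> D \<Longrightarrow> 1 \<le> i \<and> 1 \<le> j"
    and "\<And>i j i' j'. (i,j) \<in> D \<Longrightarrow> 1 \<le> i' \<Longrightarrow> i' \<le> i \<Longrightarrow> 1 \<le> j' \<Longrightarrow> j' \<le> j \<Longrightarrow> (i',j') \<in> D"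
  shows "is_diagram D"
  unfolding is_diagram_def using assms by blast

lemma is_diagram_finite: "is_diagram D \<Longrightarrow> finite D"
  by (simp add: is_diagram_def)

lemma is_diagram_pos: "is_diagram D \<Longrightarrow> (i,j) \<in> D \<Longrightarrow> 1 \<le> i \<and> 1 \<le> j"
  unfolding is_diagram_def by blast

lemma is_diagram_down:
  "is_diagram D \<Longrightarrow> (i,j) \<in> D \<Longrightarrow> 1 \<le> i' \<Longrightarrow> i' \<le> i \<Longrightarrow> 1 \<le> j' \<Longrightarrow> j' \<le> j \<Longrightarrow> (i',j') \<in> D"
  unfolding is_diagram_def by meson

lemma is_diagram_slice:
  assumes "is_diagram D" and "inj f"
    and pos: "\<And>x. f x \<in> D \<Longrightarrow> 1 \<le> x" and down: "\<And>x y. f x \<in> D \<Longrightarrow> 1 \<le> y \<Longrightarrow> y \<le> x \<Longrightarrow> f y \<in> D"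
  shows "{x. f x \<in> D} = {1..card {x. f x \<in> D}}"
proof (cases "{x. f x \<in> D} = {}")
  case False
  let ?S = "{x. f x \<in> D}"
  have fin: "finite ?S"
    using finite_vimageI[OF is_diagram_finite[OF assms(1)] assms(2)] by (simp add: vimage_def)
  have "?S = {1..Max ?S}"
  proof
    show "?S \<subseteq> {1..Max ?S}" using fin pos by (auto intro: Max_ge)
    show "{1..Max ?S} \<subseteq> ?S" using down Max_in[OF fin False] by auto
  qed
  then show ?thesis by (metis card_atLeastAtMost diff_Suc_1)
qed simp

lemma is_diagram_row:
  assumes "is_diagram D" shows "{j. (i,j) \<in> D} = {1..row_len D i}"
  unfolding row_len_def
proof (rule is_diagram_slice[OF assms])
  fix x y assume "(i,x) \<in> D" "1 \<le> y" "y \<le> x"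
  then show "(i,y) \<in> D" using is_diagram_down[OF assms, of i x i y] is_diagram_pos[OF assms, of i x] by simp
qed (use is_diagram_pos[OF assms] in \<open>auto simp: inj_def\<close>)

lemma is_diagram_mem_iff:
  assumes "is_diagram D" shows "(i,j) \<in> D \<longleftrightarrow> 1 \<le> i \<and> 1 \<le> j \<and> j \<le> row_len D i"
proof -
  have "(i,j) \<in> D \<longleftrightarrow> j \<in> {1..row_len D i}" using is_diagram_row[OF assms, of i] by blast
  then show ?thesis using is_diagram_pos[OF assms, of i j] by auto
qed

lemma is_diagram_first_column:
  assumes "is_diagram D" shows "{i. (i,1) \<in> D} = {1..nrows D}"
  unfolding nrows_def
proof (rule is_diagram_slice[OF assms])
  fix x y assume "(x,1) \<in> D" "1 \<le> y" "y \<le> x"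
  then show "(y,1) \<in> D" using is_diagram_down[OF assms, of x 1 y 1] by simp
qed (use is_diagram_pos[OF assms] in \<open>auto simp: inj_def\<close>)

lemma is_diagram_diag:
  assumes "is_diagram D" shows "(i,i) \<in> D \<longleftrightarrow> 1 \<le> i \<and> i \<le> durfee D"
proof -
  have "{i. (i,i) \<in> D} = {1..durfee D}"
    unfolding durfee_def
  proof (rule is_diagram_slice[OF assms])
    fix x y assume "(x,x) \<in> D" "1 \<le> y" "y \<le> x"
    then show "(y,y) \<in> D" using is_diagram_down[OF assms, of x x y y] by simp
  qed (use is_diagram_pos[OF assms] in \<open>auto simp: inj_def\<close>)
  then show ?thesis by (metis atLeastAtMost_iff mem_Collect_eq)
qed

lemma row_len_0: "is_diagram D \<Longrightarrow> row_len D 0 = 0"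
  unfolding row_len_def using is_diagram_pos[of D 0] by fastforce

lemma row_len_antimono:
  assumes "is_diagram D" "1 \<le> i" "i \<le> i'" shows "row_len D i' \<le> row_len D i"
proof (cases "row_len D i' = 0")
  case False
  then have "(i', row_len D i') \<in> D" using is_diagram_mem_iff[OF assms(1)] assms by simp
  then have "(i, row_len D i') \<in> D" using is_diagram_down[OF assms(1)] assms False by simp
  then show ?thesis using is_diagram_mem_iff[OF assms(1)] by blast
qed simp

lemma row_len_pos_iff:
  assumes "is_diagram D" shows "1 \<le> row_len D i \<longleftrightarrow> 1 \<le> i \<and> i \<le> nrows D"
  using is_diagram_mem_iff[OF assms, of i 1] is_diagram_first_column[OF assms] row_len_0[OF assms]
  by (cases i) auto

lemma row_len_gt_durfee:
  assumes "is_diagram D" "durfee D < x" shows "row_len D x \<le> durfee D"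
proof (rule ccontr)
  assume "\<not> row_len D x \<le> durfee D"
  then have "(x, Suc (durfee D)) \<in> D" using is_diagram_mem_iff[OF assms(1)] assms(2) by auto
  then have "(Suc (durfee D), Suc (durfee D)) \<in> D" using is_diagram_down[OF assms(1)] assms(2) by simp
  then show False using is_diagram_diag[OF assms(1)] by simp
qed

lemma durfee_le_row_len:
  assumes "is_diagram D" "1 \<le> x" "x \<le> durfee D" shows "durfee D \<le> row_len D x"
proof -
  have "(durfee D, durfee D) \<in> D" using is_diagram_diag[OF assms(1)] assms by simp
  then have "(x, durfee D) \<in> D" using is_diagram_down[OF assms(1)] assms by simp
  then show ?thesis using is_diagram_mem_iff[OF assms(1)] by blast
qed

lemma sym_eq_on_upper_half:
  fixes A B :: "('a::linorder \<times> 'a) set"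
  assumes "sym A" "sym B" "\<And>a b. a \<le> b \<Longrightarrow> (a,b) \<in> A \<longleftrightarrow> (a,b) \<in> B"
  shows "A = B"
proof (rule set_eqI)
  fix z :: "'a \<times> 'a"
  obtain a b where z: "z = (a,b)" by (cases z)
  show "z \<in> A \<longleftrightarrow> z \<in> B"
  proof (cases "a \<le> b")
    case False
    then have "(b,a) \<in> A \<longleftrightarrow> (b,a) \<in> B" using assms(3) by simp
    then show ?thesis using assms(1,2) z by (meson symD)
  qed (use assms(3) z in simp)
qed

definition sym_diagram :: "nat \<Rightarrow> (nat \<Rightarrow> nat) \<Rightarrow> (nat \<times> nat) set" where
  "sym_diagram d g = {(a,b). 1 \<le> min a b \<and> min a b \<le> d \<and> max a b \<le> g (min a b)}"

lemma sym_diagram_upper_iff: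
  "a \<le> b \<Longrightarrow> (a,b) \<in> sym_diagram d g \<longleftrightarrow> 1 \<le> a \<and> a \<le> d \<and> b \<le> g a"
  unfolding sym_diagram_def by auto

lemma sym_sym_diagram: "sym (sym_diagram d g)"
  by (rule symI) (simp add: sym_diagram_def min.commute max.commute)

lemma sym_diagram_cong: "(\<And>x. 1 \<le> x \<Longrightarrow> x \<le> d \<Longrightarrow> g x = h x) \<Longrightarrow> sym_diagram d g = sym_diagram d h"
  unfolding sym_diagram_def by auto

lemma sym_diagram_upper_row:
  "1 \<le> x \<Longrightarrow> x \<le> d \<Longrightarrow> {y. x \<le> y \<and> (x,y) \<in> sym_diagram d g} = {x..g x}"
  using sym_diagram_upper_iff[of x _ d g] by auto

lemma is_diagram_sym_diagram:
  assumes antimono: "\<And>x y. 1 \<le> x \<Longrightarrow> x \<le> y \<Longrightarrow> y \<le> d \<Longrightarrow> g y \<le> g x"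
  shows "is_diagram (sym_diagram d g)"
proof (rule is_diagramI)
  define M where "M = d + (\<Sum>x\<in>{1..d}. g x)"
  have bound: "g x \<le> M" if "1 \<le> x" "x \<le> d" for x
    using member_le_sum[of x "{1..d}" g] that unfolding M_def by simp
  have "(a,b) \<in> {1..M} \<times> {1..M}" if "(a,b) \<in> sym_diagram d g" for a b
  proof -
    have "1 \<le> min a b" "min a b \<le> d" "max a b \<le> g (min a b)" using that unfolding sym_diagram_def by auto
    then have "max a b \<le> M" using bound[of "min a b"] by simp
    then show ?thesis using \<open>1 \<le> min a b\<close> by simp
  qed
  then have "sym_diagram d g \<subseteq> {1..M} \<times> {1..M}" by auto
  then show "finite (sym_diagram d g)" using finite_subset by blast
  show "\<And>i j. (i,j) \<in> sym_diagram d g \<Longrightarrow> 1 \<le> i \<and> 1 \<le> j" unfolding sym_diagram_def by auto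
  fix i j i' j'
  assume ij: "(i,j) \<in> sym_diagram d g" "1 \<le> i'" "i' \<le> i" "1 \<le> j'" "j' \<le> j"
  have m: "min i' j' \<le> min i j" "max i' j' \<le> max i j" using ij(3,5) by auto
  have g: "g (min i j) \<le> g (min i' j')"
    by (rule antimono) (use ij in \<open>auto simp: sym_diagram_def\<close>)
  have "min i j \<le> d" "max i j \<le> g (min i j)" using ij(1) unfolding sym_diagram_def by auto
  then have "min i' j' \<le> d" "max i' j' \<le> g (min i' j')" using m g by (meson order_trans)+
  then show "(i',j') \<in> sym_diagram d g" using ij(2,4) unfolding sym_diagram_def by simp
qed

lemma is_diagram_diagram:
  assumes "is_partition lam" shows "is_diagram (diagram lam)"
proof (rule is_diagramI)
  have sorted: "sorted_wrt (\<ge>) lam" using assms unfolding is_partition_def by simp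
  have "lam ! (i - 1) \<le> sum_list lam" if "1 \<le> i" "i \<le> length lam" for i
    using elem_le_sum_list[of "i - 1" lam] that by simp
  then have "diagram lam \<subseteq> {1..length lam} \<times> {1..sum_list lam}"
    unfolding diagram_def by fastforce
  then show "finite (diagram lam)" using finite_subset by blast
  show "\<And>i j. (i,j) \<in> diagram lam \<Longrightarrow> 1 \<le> i \<and> 1 \<le> j" unfolding diagram_def by auto
  fix i j i' j'
  assume ij: "(i,j) \<in> diagram lam" "1 \<le> i'" "i' \<le> i" "1 \<le> j'" "j' \<le> j"
  have "lam ! (i - 1) \<le> lam ! (i' - 1)"
    using sorted_wrt_nth_less[OF sorted, of "i' - 1" "i - 1"] ij unfolding diagram_def
    by (cases "i' = i") auto
  then show "(i',j') \<in> diagram lam" using ij unfolding diagram_def by auto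
qed

lemma sym_diagram_of_self_conjugate: "self_conjugate lam \<Longrightarrow> sym (diagram lam)"
  unfolding self_conjugate_def transp_diag_def sym_def by blast

lemma diagram_inj:
  assumes "is_partition lam" "is_partition mu" "diagram lam = diagram mu"
  shows "lam = mu"
proof -
  have rows: "{j. (i,j) \<in> diagram xs} = {1..xs ! (i - 1)}" if "1 \<le> i" "i \<le> length xs" for xs i
    using that unfolding diagram_def by auto
  have first_column: "{i. (i,1) \<in> diagram xs} = {1..length xs}" if "is_partition xs" for xs
  proof -
    have "\<forall>x\<in>set xs. 1 \<le> x" using that unfolding is_partition_def by (metis less_one not_le)
    then show ?thesis unfolding diagram_def by (auto simp: all_set_conv_all_nth)
  qed
  have len: "length lam = length mu"
    using first_column[OF assms(1)] first_column[OF assms(2)] assms(3) by (metis card_atLeastAtMost diff_Suc_1)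
  show ?thesis
  proof (rule nth_equalityI[OF len])
    fix t assume "t < length lam"
    then have "{1..lam ! t} = {1..mu ! t}"
      using rows[of "Suc t" lam] rows[of "Suc t" mu] len assms(3) by (metis diff_Suc_1 le_add1 plus_1_eq_Suc Suc_leI)
    then show "lam ! t = mu ! t" by (metis card_atLeastAtMost diff_Suc_1)
  qed
qed

section \<open>Indexing the rim\<close>

lemma length_concat_map_upt:
  "length (concat (map g [1..<N+1])) = (\<Sum>x\<in>{1..<N+1}. length (g x))"
  by (induction N) simp_all

lemma nth_concat_map_upt:
  assumes "1 \<le> i" "i \<le> N" "c < length (g i)"
  shows "concat (map g [1..<N+1]) ! ((\<Sum>x\<in>{1..<i}. length (g x)) + c) = g i ! c"
  using assms
proof (induction N)
  case (Suc N)
  have split: "[1..<Suc N + 1] = [1..<N+1] @ [N+1]" by simp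
  show ?case
  proof (cases "i \<le> N")
    case True
    have "(\<Sum>x\<in>{1..<i}. length (g x)) + c < (\<Sum>x\<in>{1..<i+1}. length (g x))"
      using Suc.prems by simp
    also have "\<dots> \<le> (\<Sum>x\<in>{1..<N+1}. length (g x))" by (rule sum_mono2) (use True in auto)
    finally have "(\<Sum>x\<in>{1..<i}. length (g x)) + c < length (concat (map g [1..<N+1]))"
      using length_concat_map_upt by metis
    then show ?thesis
      unfolding split using Suc.IH[OF Suc.prems(1) True Suc.prems(3)] by (simp add: nth_append)
  next
    case False
    then have "i = N + 1" using Suc.prems by simp
    then show ?thesis unfolding split using length_concat_map_upt[of g N] Suc.prems by (simp add: nth_append)
  qed
qed simp

definition rim_row_len :: "(nat \<times> nat) set \<Rightarrow> nat \<Rightarrow> nat" where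
  "rim_row_len D i = row_len D i + 1 - max 1 (row_len D (Suc i))"

definition rim_row :: "(nat \<times> nat) set \<Rightarrow> nat \<Rightarrow> (nat \<times> nat) list" where
  "rim_row D i = map (\<lambda>j. (i,j)) (rev [max 1 (row_len D (Suc i))..<row_len D i + 1])"

definition rim_start :: "(nat \<times> nat) set \<Rightarrow> nat \<Rightarrow> nat" where
  "rim_start D i = (\<Sum>x\<in>{1..<i}. rim_row_len D x)"

lemma rim_row_set:
  assumes "is_diagram D" shows "{j. (i,j) \<in> rim D} = {max 1 (row_len D (Suc i))..<row_len D i + 1}"
proof (cases "i = 0")
  case True
  then show ?thesis using row_len_0[OF assms] is_diagram_pos[OF assms] by (auto simp: rim_def)
next
  case False
  then show ?thesis
    using is_diagram_mem_iff[OF assms, of i] is_diagram_mem_iff[OF assms, of "i+1"] by (auto simp: rim_def)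
qed

lemma rim_list_eq: "is_diagram D \<Longrightarrow> rim_list D = concat (map (rim_row D) [1..<nrows D + 1])"
  unfolding rim_list_def rim_row_def using rim_row_set by simp

lemma length_rim_row: "length (rim_row D i) = rim_row_len D i"
  unfolding rim_row_def rim_row_len_def by (simp only: length_map length_rev length_upt)

lemma length_rim_list: "is_diagram D \<Longrightarrow> length (rim_list D) = rim_start D (nrows D + 1)"
  unfolding rim_list_eq rim_start_def length_concat_map_upt length_rim_row by simp

lemma rim_row_len_pos:
  assumes "is_diagram D" "1 \<le> i" "i \<le> nrows D" shows "1 \<le> rim_row_len D i"
proof -
  have "1 \<le> row_len D i" using row_len_pos_iff[OF assms(1)] assms by blast
  moreover have "row_len D (Suc i) \<le> row_len D i" using row_len_antimono[OF assms(1,2)] by simp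
  ultimately show ?thesis unfolding rim_row_len_def by simp
qed

lemma rim_list_nth:
  assumes "is_diagram D" "1 \<le> i" "i \<le> nrows D" "c < rim_row_len D i"
  shows "rim_list D ! (rim_start D i + c) = (i, row_len D i - c)"
proof -
  have "rim_list D ! (rim_start D i + c) = rim_row D i ! c"
    unfolding rim_list_eq[OF assms(1)] rim_start_def
    using nth_concat_map_upt[of i "nrows D" c "rim_row D"] assms by (simp add: length_rim_row)
  also have "\<dots> = (i, row_len D i - c)"
  proof -
    have "1 \<le> row_len D i" using row_len_pos_iff[OF assms(1)] assms by blast
    moreover have "row_len D (Suc i) \<le> row_len D i" using row_len_antimono[OF assms(1,2)] by simp
    ultimately show ?thesis
      using assms(4) unfolding rim_row_def rim_row_len_def by (simp add: rev_nth del: upt_Suc)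
  qed
  finally show ?thesis .
qed

lemma rim_start_1 [simp]: "rim_start D 1 = 0" "rim_start D (Suc 0) = 0"
  by (simp_all add: rim_start_def)

lemma rim_start_Suc: "1 \<le> i \<Longrightarrow> rim_start D (Suc i) = rim_start D i + rim_row_len D i"
  unfolding rim_start_def by simp

lemma rim_start_mono: "i \<le> i' \<Longrightarrow> rim_start D i \<le> rim_start D i'"
  unfolding rim_start_def by (rule sum_mono2) auto

lemma rim_start_strict_mono:
  assumes "is_diagram D" "1 \<le> i" "i < i'" "i' \<le> nrows D + 1" shows "rim_start D i < rim_start D i'"
proof -
  have "rim_start D i < rim_start D (Suc i)"
    using rim_start_Suc[OF assms(2)] rim_row_len_pos[OF assms(1,2)] assms by simp
  also have "\<dots> \<le> rim_start D i'" using rim_start_mono assms by simp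
  finally show ?thesis .
qed

lemma rim_index_decomp:
  assumes "k < rim_start D i"
  shows "\<exists>x c. 1 \<le> x \<and> x < i \<and> c < rim_row_len D x \<and> k = rim_start D x + c"
  using assms
proof (induction i)
  case (Suc i)
  show ?case
  proof (cases "i = 0")
    case True then show ?thesis using Suc by (simp add: rim_start_def)
  next
    case False
    show ?thesis
    proof (cases "k < rim_start D i")
      case True then show ?thesis using Suc.IH by fastforce
    next
      case False
      then have "k - rim_start D i < rim_row_len D i" using Suc.prems rim_start_Suc[of i D] \<open>i \<noteq> 0\<close> by simp
      then show ?thesis using False \<open>i \<noteq> 0\<close> by (intro exI[of _ i] exI[of _ "k - rim_start D i"]) simp
    qed
  qed
qed (simp add: rim_start_def)

lemma rim_list_nth_row:
  assumes "is_diagram D" "k < length (rim_list D)"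
  obtains x where "1 \<le> x" "x \<le> nrows D" "rim_start D x \<le> k" "k < rim_start D (Suc x)"
    "rim_list D ! k = (x, row_len D x - (k - rim_start D x))"
proof -
  obtain x c where xc: "1 \<le> x" "x < nrows D + 1" "c < rim_row_len D x" "k = rim_start D x + c"
    using rim_index_decomp[of k D "nrows D + 1"] assms length_rim_list[OF assms(1)] by auto
  then show ?thesis
    using that rim_list_nth[OF assms(1), of x c] rim_start_Suc[of x D] by simp
qed

lemma least_index_in_row:
  assumes "is_diagram D" "1 \<le> i" "i \<le> nrows D"
  shows "(LEAST k. k < length (rim_list D) \<and> fst (rim_list D ! k) = i) = rim_start D i"
proof (rule Least_equality)
  have "rim_start D i < length (rim_list D)"
    using rim_start_strict_mono[OF assms(1,2)] assms length_rim_list[OF assms(1)] by simp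
  then show "rim_start D i < length (rim_list D) \<and> fst (rim_list D ! rim_start D i) = i"
    using rim_list_nth[OF assms, of 0] rim_row_len_pos[OF assms] by simp
next
  fix k assume k: "k < length (rim_list D) \<and> fst (rim_list D ! k) = i"
  then obtain x where "rim_start D x \<le> k" "k < rim_start D (Suc x)" "rim_list D ! k = (x, row_len D x - (k - rim_start D x))"
    using rim_list_nth_row[OF assms(1)] by blast
  then show "rim_start D i \<le> k" using k rim_start_mono[of i x D] by simp
qed

lemma p_segments_unfold:
  fixes p f :: nat
  assumes "is_diagram D" "1 \<le> i" "i \<le> nrows D"
  defines "R \<equiv> rim_list D" and "n \<equiv> nrows D"
  defines "e \<equiv> min (rim_start D i + p - 1) (length R - 1)"
  shows "pseg_idx (Suc f) p R n (rim_start D i) =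
    {rim_start D i..e} \<union> (if fst (R!e) = n then {} else pseg_idx f p R n (rim_start D (Suc (fst (R!e)))))"
proof (cases "fst (R!e) = n")
  case False
  have "rim_start D i < length R"
    using rim_start_strict_mono[OF assms(1,2), of "nrows D + 1"] assms length_rim_list[OF assms(1)] by simp
  then have "e < length R" unfolding e_def by simp
  then obtain x where "1 \<le> x" "x \<le> n" "fst (R!e) = x"
    using rim_list_nth_row[OF assms(1)] unfolding R_def n_def by (metis fst_conv)
  then have "(LEAST k. k < length R \<and> fst (R ! k) = fst (R!e) + 1) = rim_start D (Suc (fst (R!e)))"
    using least_index_in_row[OF assms(1), of "x + 1"] False unfolding R_def n_def by simp
  then show ?thesis using False by (simp add: Let_def e_def)
qed (simp add: Let_def e_def)

lemma p_segments_subset: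
  assumes "is_diagram D" "1 \<le> p" "1 \<le> i" "i \<le> nrows D"
  shows "pseg_idx f p (rim_list D) (nrows D) (rim_start D i) \<subseteq> {rim_start D i..<length (rim_list D)}"
  using assms(3,4)
proof (induction f arbitrary: i)
  case (Suc f)
  define R where "R = rim_list D"
  define e where "e = min (rim_start D i + p - 1) (length R - 1)"
  have "rim_start D i < length R"
    using rim_start_strict_mono[OF assms(1) Suc.prems(1), of "nrows D + 1"] Suc.prems
      length_rim_list[OF assms(1)] unfolding R_def by simp
  then have e: "e < length R" "rim_start D i \<le> e" unfolding e_def using assms(2) by auto
  then obtain x where x: "x \<le> nrows D" "e < rim_start D (Suc x)" "fst (R!e) = x"
    using rim_list_nth_row[OF assms(1)] unfolding R_def by (metis fst_conv)
  have rest: "pseg_idx f p R (nrows D) (rim_start D (Suc (fst (R!e)))) \<subseteq> {rim_start D i..<length R}"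
    if "fst (R!e) \<noteq> nrows D"
  proof -
    have "pseg_idx f p R (nrows D) (rim_start D (Suc x)) \<subseteq> {rim_start D (Suc x)..<length R}"
      using Suc.IH[of "Suc x"] x that unfolding R_def by simp
    then show ?thesis using x e by auto
  qed
  have "pseg_idx (Suc f) p R (nrows D) (rim_start D i) = {rim_start D i..e} \<union>
      (if fst (R!e) = nrows D then {} else pseg_idx f p R (nrows D) (rim_start D (Suc (fst (R!e)))))"
    using p_segments_unfold[OF assms(1) Suc.prems, where p=p and f=f] unfolding R_def e_def by simp
  then show ?case using rest e unfolding R_def by auto
qed simp

section \<open>Segment profiles\<close>

text \<open>
  Rows \<open>i0..d\<close> of the upper half of a self-conjugate diagram with row lengths \<open>lam\<close>, cut by the
  p-segments: the p-rim* contains the last \<open>k x\<close> cells of row \<open>x\<close>, \<open>E\<close> is the set of rows in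
  which a p-segment ends, together with \<open>d\<close>, and \<open>L\<close> is the number of cells of the last segment
  on or above the diagonal.
\<close>
locale cut_profile =
  fixes p d :: nat and lam k :: "nat \<Rightarrow> nat" and L :: nat and E :: "nat set" and i0 :: nat
  assumes start_pos: "1 \<le> i0"
    and ends_subset: "E \<subseteq> {i0..d}"
    and last_row_end: "d \<in> E"
    and k_pos: "\<And>x. i0 \<le> x \<Longrightarrow> x \<le> d \<Longrightarrow> 1 \<le> k x"
    and k_inner: "\<And>x. i0 \<le> x \<Longrightarrow> x \<le> d \<Longrightarrow> x \<notin> E \<Longrightarrow> k x + lam (Suc x) = lam x + 1"
    and k_end: "\<And>x. x \<in> E \<Longrightarrow> x < d \<Longrightarrow> k x + lam (Suc x) \<le> lam x + 1"
    and k_last: "k d + d \<le> lam d + 1"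
    and blocks: "\<And>j. j \<in> E \<Longrightarrow> \<exists>i\<in>{i0..j}. (\<forall>x\<in>{i..<j}. x \<notin> E) \<and> (i = i0 \<or> i - 1 \<in> E) \<and>
                   sum k {i..j} = (if j = d then L else p)"
    and last_block_pos: "1 \<le> L" and last_block_le: "L \<le> p"
    and sum_k: "sum k {i0..d} + p = p * card E + L"
begin

lemma start_le_last: "i0 \<le> d"
  using ends_subset last_row_end by auto

lemma k_step: "i0 \<le> x \<Longrightarrow> x < d \<Longrightarrow> k x + lam (Suc x) \<le> lam x + 1"
  using k_inner k_end by (cases "x \<in> E") fastforce+

lemma lam_antimono: "i0 \<le> x \<Longrightarrow> x \<le> y \<Longrightarrow> y \<le> d \<Longrightarrow> lam y \<le> lam x"
proof (induction y)
  case (Suc y)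
  show ?case
  proof (cases "x = Suc y")
    case False
    then have "x \<le> y" "y < d" using Suc.prems by auto
    then show ?thesis using k_step[of y] k_pos[of y] Suc by simp
  qed simp
qed simp

lemma k_le_lam: "i0 \<le> x \<Longrightarrow> x \<le> d \<Longrightarrow> k x \<le> lam x"
proof -
  assume x: "i0 \<le> x" "x \<le> d"
  have "d \<le> lam d" using k_last k_pos[of d] start_le_last by simp
  then have "1 \<le> lam (Suc x)" if "x < d"
    using lam_antimono[of "Suc x" d] that x start_pos by simp
  then show ?thesis using k_step[of x] k_last start_pos x by (cases "x = d") auto
qed

lemma lam_Suc_inner: "i0 \<le> x \<Longrightarrow> x < d \<Longrightarrow> x \<notin> E \<Longrightarrow> lam (Suc x) = (lam x - k x) + 1"
  using k_inner[of x] k_le_lam[of x] by simp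

lemma lam_Suc_end: "x \<in> E \<Longrightarrow> x < d \<Longrightarrow> lam (Suc x) \<le> (lam x - k x) + 1"
  using k_end[of x] k_le_lam[of x] ends_subset by auto

lemma rest_antimono: "i0 \<le> x \<Longrightarrow> x \<le> y \<Longrightarrow> y \<le> d \<Longrightarrow> lam y - k y \<le> lam x - k x"
proof (induction y)
  case (Suc y)
  show ?case
  proof (cases "x = Suc y")
    case False
    then have y: "x \<le> y" "y < d" using Suc.prems by auto
    have "lam (Suc y) \<le> (lam y - k y) + 1"
      using lam_Suc_inner[of y] lam_Suc_end[of y] y Suc.prems by (cases "y \<in> E") auto
    then show ?thesis using k_pos[of "Suc y"] Suc y by simp
  qed simp
qed simp

lemma block_eq:
  "i0 \<le> i \<Longrightarrow> i \<le> j \<Longrightarrow> j \<le> d \<Longrightarrow> \<forall>x\<in>{i..<j}. x \<notin> E \<Longrightarrow>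
   lam i + j = (lam j - k j) + i + sum k {i..j}"
proof (induction "j - i" arbitrary: i)
  case 0
  then show ?case using k_le_lam[of j] by simp
next
  case (Suc m)
  then have "lam (Suc i) + j = (lam j - k j) + Suc i + sum k {Suc i..j}"
    using Suc.hyps(1)[of "Suc i"] by auto
  moreover have "lam (Suc i) = (lam i - k i) + 1" using lam_Suc_inner[of i] Suc by simp
  moreover have "sum k {i..j} = k i + sum k {Suc i..j}" using Suc.hyps(2) by (simp add: sum.atLeast_Suc_atMost)
  moreover have "k i \<le> lam i" using k_le_lam[of i] Suc by simp
  ultimately show ?case by simp
qed

end

lemma cut_profile_single_block:
  assumes "1 \<le> i" "i \<le> d" "1 \<le> L" "L \<le> p"
    and "\<And>x. i \<le> x \<Longrightarrow> x \<le> d \<Longrightarrow> 1 \<le> k x"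
    and "\<And>x. i \<le> x \<Longrightarrow> x < d \<Longrightarrow> k x + lam (Suc x) = lam x + 1"
    and "k d + d \<le> lam d + 1" and "sum k {i..d} = L"
  shows "cut_profile p d lam k L {d} i"
proof (rule cut_profile.intro)
  show "\<And>j. j \<in> {d} \<Longrightarrow> \<exists>i'\<in>{i..j}. (\<forall>x\<in>{i'..<j}. x \<notin> {d}) \<and> (i' = i \<or> i' - 1 \<in> {d}) \<and>
          sum k {i'..j} = (if j = d then L else p)"
    using assms by auto
qed (use assms in auto)

lemma cut_profile_prepend_block:
  assumes P: "cut_profile p d lam k' L E (Suc j)" and ij: "1 \<le> i" "i \<le> j" "j < d"
    and k_eq: "\<And>x. Suc j \<le> x \<Longrightarrow> k x = k' x"
    and k_pos: "\<And>x. i \<le> x \<Longrightarrow> x \<le> j \<Longrightarrow> 1 \<le> k x"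
    and k_inner: "\<And>x. i \<le> x \<Longrightarrow> x < j \<Longrightarrow> k x + lam (Suc x) = lam x + 1"
    and k_end: "k j + lam (Suc j) \<le> lam j + 1" and block: "sum k {i..j} = p"
  shows "cut_profile p d lam k L (insert j E) i"
proof -
  interpret P: cut_profile p d lam k' L E "Suc j" by (rule P)
  have j_notin: "j \<notin> E" using P.ends_subset by auto
  have sum_rest: "sum k {Suc j..d} = sum k' {Suc j..d}" using k_eq by (intro sum.cong) auto
  have "{i..d} = {i..j} \<union> {Suc j..d}" using ij by auto
  then have "sum k {i..d} = p + sum k' {Suc j..d}"
    using block sum_rest by (simp add: sum.union_disjoint)
  moreover have "finite E" using P.ends_subset finite_subset by blast
  ultimately have total: "sum k {i..d} + p = p * card (insert j E) + L"
    using P.sum_k j_notin by simp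
  have blocks: "\<exists>i'\<in>{i..j'}. (\<forall>x\<in>{i'..<j'}. x \<notin> insert j E) \<and> (i' = i \<or> i' - 1 \<in> insert j E) \<and>
      sum k {i'..j'} = (if j' = d then L else p)" if j': "j' \<in> insert j E" for j'
  proof (cases "j' = j")
    case True
    then show ?thesis using block ij P.ends_subset by (intro bexI[of _ i]) auto
  next
    case False
    then obtain i' where i': "i' \<in> {Suc j..j'}" "\<forall>x\<in>{i'..<j'}. x \<notin> E" "i' = Suc j \<or> i' - 1 \<in> E"
        "sum k' {i'..j'} = (if j' = d then L else p)"
      using P.blocks[of j'] j' by blast
    have "sum k {i'..j'} = sum k' {i'..j'}" using i'(1) k_eq by (intro sum.cong) auto
    then show ?thesis using i' ij by (intro bexI[of _ i']) auto
  qed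
  show ?thesis
  proof (rule cut_profile.intro)
    show "\<And>x. i \<le> x \<Longrightarrow> x \<le> d \<Longrightarrow> 1 \<le> k x"
      using k_pos P.k_pos k_eq by (metis not_less_eq_eq)
    show "\<And>x. i \<le> x \<Longrightarrow> x \<le> d \<Longrightarrow> x \<notin> insert j E \<Longrightarrow> k x + lam (Suc x) = lam x + 1"
      using k_inner P.k_inner k_eq by (metis insertCI not_less_eq_eq order_le_less)
    show "\<And>x. x \<in> insert j E \<Longrightarrow> x < d \<Longrightarrow> k x + lam (Suc x) \<le> lam x + 1"
      using k_end P.k_end P.ends_subset k_eq by auto
    show "k d + d \<le> lam d + 1" using P.k_last k_eq ij by simp
  qed (use ij P.ends_subset P.last_row_end P.last_block_pos P.last_block_le blocks total in auto)
qed

lemma cut_profile_block_start_le: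
  assumes P: "cut_profile p d lam k L E i0" and Q: "cut_profile p d lam' k' L' E' i0"
    and rest_eq: "\<And>x. i0 \<le> x \<Longrightarrow> x \<le> d \<Longrightarrow> lam x - k x = lam' x - k' x"
    and blk: "i0 \<le> i" "i \<le> j" "j \<le> d" "\<forall>x\<in>{i..<j}. x \<notin> E" "sum k {i..j} = s"
    and blk': "i' \<le> j" "\<forall>x\<in>{i'..<j}. x \<notin> E'" "i' = i0 \<or> i' - 1 \<in> E'" "sum k' {i'..j} = s"
  shows "i' \<le> i"
proof (rule ccontr)
  interpret P: cut_profile p d lam k L E i0 by (rule P)
  interpret Q: cut_profile p d lam' k' L' E' i0 by (rule Q)
  \<comment> \<open>if \<open>i < i'\<close>, the segment end at \<open>i' - 1\<close> and the antitonicity of \<open>lam - k\<close> give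
     \<open>lam' i' \<le> lam i\<close>, which contradicts the two block equations\<close>
  assume "\<not> i' \<le> i"
  then have i': "i' - 1 \<in> E'" "i \<le> i' - 1" "i' - 1 < j" "Suc (i' - 1) = i'"
    using blk(1) blk'(1,3) by auto
  have "lam i + j = (lam j - k j) + i + s" using P.block_eq blk by simp
  moreover have "lam' i' + j = (lam' j - k' j) + i' + s"
    using Q.block_eq[of i' j] blk(1,3) blk' \<open>\<not> i' \<le> i\<close> by simp
  moreover have "lam' i' \<le> (lam' (i' - 1) - k' (i' - 1)) + 1"
    using Q.lam_Suc_end[of "i' - 1"] i' blk(3) by simp
  moreover have "lam (i' - 1) - k (i' - 1) \<le> lam i - k i" using P.rest_antimono i' blk by simp
  moreover have "1 \<le> k i" "k i \<le> lam i" using P.k_pos[of i] P.k_le_lam[of i] blk by auto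
  moreover have "lam' (i' - 1) - k' (i' - 1) = lam (i' - 1) - k (i' - 1)" "lam' j - k' j = lam j - k j"
    using rest_eq[of "i' - 1"] rest_eq[of j] i' blk by auto
  ultimately show False using \<open>\<not> i' \<le> i\<close> by linarith
qed

lemma cut_profile_block_start_eq:
  assumes P: "cut_profile p d lam k L E i0" and Q: "cut_profile p d lam' k' L' E' i0"
    and rest_eq: "\<And>x. i0 \<le> x \<Longrightarrow> x \<le> d \<Longrightarrow> lam x - k x = lam' x - k' x"
    and "j \<le> d"
    and blk: "i \<in> {i0..j}" "\<forall>x\<in>{i..<j}. x \<notin> E" "i = i0 \<or> i - 1 \<in> E" "sum k {i..j} = s"
    and blk': "i' \<in> {i0..j}" "\<forall>x\<in>{i'..<j}. x \<notin> E'" "i' = i0 \<or> i' - 1 \<in> E'" "sum k' {i'..j} = s"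
  shows "i = i'"
  using cut_profile_block_start_le[OF P Q rest_eq, of i j s i']
    cut_profile_block_start_le[OF Q P rest_eq[symmetric], of i' j s i] assms(4) blk blk'
  by fastforce

lemma cut_profile_ends_below_eq:
  assumes P: "cut_profile p d lam k L E i0" and Q: "cut_profile p d lam' k' L E' i0"
    and rest_eq: "\<And>x. i0 \<le> x \<Longrightarrow> x \<le> d \<Longrightarrow> lam x - k x = lam' x - k' x"
  shows "j \<in> E \<Longrightarrow> j \<in> E' \<Longrightarrow> x < j \<Longrightarrow> x \<in> E \<longleftrightarrow> x \<in> E'"
proof (induction j arbitrary: x rule: less_induct)
  case (less j)
  interpret P: cut_profile p d lam k L E i0 by (rule P)
  interpret Q: cut_profile p d lam' k' L E' i0 by (rule Q)
  obtain i where i: "i \<in> {i0..j}" "\<forall>x\<in>{i..<j}. x \<notin> E" "i = i0 \<or> i - 1 \<in> E"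
      "sum k {i..j} = (if j = d then L else p)"
    using P.blocks[OF less.prems(1)] by blast
  obtain i' where i': "i' \<in> {i0..j}" "\<forall>x\<in>{i'..<j}. x \<notin> E'" "i' = i0 \<or> i' - 1 \<in> E'"
      "sum k' {i'..j} = (if j = d then L else p)"
    using Q.blocks[OF less.prems(2)] by blast
  have "j \<le> d" using P.ends_subset less.prems by auto
  then have "i = i'" using cut_profile_block_start_eq[OF P Q rest_eq _ i i'] by simp
  consider "i \<le> x" | "x < i" "i = i0" | "x < i" "i - 1 \<in> E" "i - 1 \<in> E'" "i - 1 < j"
    using i i' \<open>i = i'\<close> by fastforce
  then show ?case
  proof cases
    case 1
    then show ?thesis using i(2) i'(2) \<open>i = i'\<close> \<open>x < j\<close> by auto
  next
    case 2
    then show ?thesis using P.ends_subset Q.ends_subset by auto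
  next
    case 3
    then show ?thesis using less.IH[of "i - 1" x] by (cases "x = i - 1") auto
  qed
qed

lemma cut_profile_ends_eq:
  assumes P: "cut_profile p d lam k L E i0" and Q: "cut_profile p d lam' k' L E' i0"
    and rest_eq: "\<And>x. i0 \<le> x \<Longrightarrow> x \<le> d \<Longrightarrow> lam x - k x = lam' x - k' x"
  shows "E = E'"
proof -
  interpret P: cut_profile p d lam k L E i0 by (rule P)
  interpret Q: cut_profile p d lam' k' L E' i0 by (rule Q)
  have "x \<in> E \<longleftrightarrow> x \<in> E'" if "x < d" for x
    using cut_profile_ends_below_eq[OF P Q rest_eq P.last_row_end Q.last_row_end that] .
  then show ?thesis
    using P.ends_subset Q.ends_subset P.last_row_end Q.last_row_end
    by (metis atLeastAtMost_iff nat_less_le set_eq_iff subsetD)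
qed

lemma cut_profile_unique:
  assumes P: "cut_profile p d lam k L E i0" and Q: "cut_profile p d lam' k' L E' i0"
    and rest_eq: "\<And>x. i0 \<le> x \<Longrightarrow> x \<le> d \<Longrightarrow> lam x - k x = lam' x - k' x"
    and x: "i0 \<le> x" "x \<le> d"
  shows "lam x = lam' x"
proof -
  interpret P: cut_profile p d lam k L E i0 by (rule P)
  interpret Q: cut_profile p d lam' k' L E' i0 by (rule Q)
  have "E = E'" by (rule cut_profile_ends_eq[OF P Q rest_eq])
  define j where "j = (LEAST j. j \<in> E \<and> x \<le> j)"
  have j: "j \<in> E" "x \<le> j" using LeastI[of "\<lambda>j. j \<in> E \<and> x \<le> j" d] P.last_row_end x
    unfolding j_def by auto
  have j_min: "j \<le> j'" if "j' \<in> E" "x \<le> j'" for j' unfolding j_def using that by (simp add: Least_le)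
  have "j \<le> d" using P.ends_subset j by auto
  obtain i where i: "i \<in> {i0..j}" "\<forall>y\<in>{i..<j}. y \<notin> E" "i = i0 \<or> i - 1 \<in> E"
      "sum k {i..j} = (if j = d then L else p)"
    using P.blocks[OF j(1)] by blast
  obtain i' where i': "i' \<in> {i0..j}" "\<forall>y\<in>{i'..<j}. y \<notin> E'" "i' = i0 \<or> i' - 1 \<in> E'"
      "sum k' {i'..j} = (if j = d then L else p)"
    using Q.blocks[of j] j \<open>E = E'\<close> by blast
  have "i = i'" using cut_profile_block_start_eq[OF P Q rest_eq \<open>j \<le> d\<close> i i'] .
  have "i \<le> x"
  proof (rule ccontr)
    assume "\<not> i \<le> x"
    then have "i - 1 \<in> E" "x \<le> i - 1" using i(3) x by auto
    then show False using j_min \<open>\<not> i \<le> x\<close> i(1) by fastforce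
  qed
  show ?thesis
  proof (cases "x = i")
    case True
    have "lam i + j = (lam j - k j) + i + sum k {i..j}" using P.block_eq i \<open>j \<le> d\<close> by simp
    moreover have "lam' i + j = (lam' j - k' j) + i + sum k' {i..j}"
      using Q.block_eq i' \<open>i = i'\<close> \<open>j \<le> d\<close> by simp
    ultimately show ?thesis using rest_eq[of j] i i' \<open>i = i'\<close> \<open>j \<le> d\<close> True by simp
  next
    case False
    then have y: "x - 1 \<in> {i..<j}" "i0 \<le> x - 1" "x - 1 < d" "Suc (x - 1) = x"
      using \<open>i \<le> x\<close> j \<open>j \<le> d\<close> i(1) by auto
    then show ?thesis
      using P.lam_Suc_inner[of "x - 1"] Q.lam_Suc_inner[of "x - 1"] rest_eq[of "x - 1"] i(2) i'(2) \<open>i = i'\<close>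
      by simp
  qed
qed

section \<open>The p-segments of a self-conjugate diagram\<close>

text \<open>
  The rim cells \<open>(x,y)\<close> of row \<open>x\<close> with \<open>x \<le> y\<close> are its first \<open>upper_rim_row_len D x\<close> rim cells;
  in \<^const>\<open>rim_list\<close> all these cells come before index \<open>upper_rim_end D\<close>, all others after it.
\<close>
definition upper_rim_row_len :: "(nat \<times> nat) set \<Rightarrow> nat \<Rightarrow> nat" where
  "upper_rim_row_len D x =
     (if x < durfee D then rim_row_len D x else row_len D (durfee D) + 1 - durfee D)"

definition upper_rim_end :: "(nat \<times> nat) set \<Rightarrow> nat" where
  "upper_rim_end D = rim_start D (durfee D) + upper_rim_row_len D (durfee D)"

locale self_conj_diagram =
  fixes D :: "(nat \<times> nat) set"
  assumes diagram: "is_diagram D" and symmetric: "sym D" and nonempty: "D \<noteq> {}"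
begin

lemma durfee_pos: "1 \<le> durfee D"
proof -
  obtain a b where "(a,b) \<in> D" using nonempty by auto
  then have "(1,1) \<in> D" using is_diagram_pos[OF diagram] is_diagram_down[OF diagram] by blast
  then show ?thesis using is_diagram_diag[OF diagram, of 1] by simp
qed

lemma durfee_le_nrows: "durfee D \<le> nrows D"
proof -
  have "1 \<le> row_len D (durfee D)" using durfee_le_row_len[OF diagram, of "durfee D"] durfee_pos by simp
  then show ?thesis using row_len_pos_iff[OF diagram] by blast
qed

lemma eq_sym_diagram: "D = sym_diagram (durfee D) (row_len D)"
proof (rule sym_eq_on_upper_half[OF symmetric sym_sym_diagram])
  fix a b :: nat assume "a \<le> b"
  show "(a,b) \<in> D \<longleftrightarrow> (a,b) \<in> sym_diagram (durfee D) (row_len D)"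
  proof
    assume ab: "(a,b) \<in> D"
    then have "(a,a) \<in> D" using is_diagram_down[OF diagram] is_diagram_pos[OF diagram] \<open>a \<le> b\<close> by blast
    then show "(a,b) \<in> sym_diagram (durfee D) (row_len D)"
      using ab sym_diagram_upper_iff[OF \<open>a \<le> b\<close>] is_diagram_mem_iff[OF diagram] is_diagram_diag[OF diagram]
      by blast
  next
    assume "(a,b) \<in> sym_diagram (durfee D) (row_len D)"
    then show "(a,b) \<in> D"
      using sym_diagram_upper_iff[OF \<open>a \<le> b\<close>] is_diagram_mem_iff[OF diagram] \<open>a \<le> b\<close> by auto
  qed
qed

lemma rim_row_len_upper:
  assumes "1 \<le> x" "x < durfee D"
  shows "rim_row_len D x = row_len D x + 1 - row_len D (Suc x)"
    and "row_len D (Suc x) \<le> row_len D x" and "durfee D \<le> row_len D (Suc x)"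
proof -
  show "durfee D \<le> row_len D (Suc x)" using durfee_le_row_len[OF diagram] assms by simp
  then show "rim_row_len D x = row_len D x + 1 - row_len D (Suc x)"
    using durfee_pos unfolding rim_row_len_def by simp
  show "row_len D (Suc x) \<le> row_len D x" using row_len_antimono[OF diagram assms(1)] by simp
qed

lemma upper_rim_row_len_pos: "1 \<le> x \<Longrightarrow> x \<le> durfee D \<Longrightarrow> 1 \<le> upper_rim_row_len D x"
  unfolding upper_rim_row_len_def
  using rim_row_len_pos[OF diagram] durfee_le_nrows durfee_le_row_len[OF diagram, of "durfee D"] durfee_pos
  by auto

lemma upper_rim_row_len_le: "1 \<le> x \<Longrightarrow> x \<le> durfee D \<Longrightarrow> upper_rim_row_len D x \<le> rim_row_len D x"
  using row_len_gt_durfee[OF diagram, of "Suc (durfee D)"] durfee_pos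
  unfolding upper_rim_row_len_def rim_row_len_def by auto

lemma upper_rim_row_len_inner:
  "1 \<le> x \<Longrightarrow> x < durfee D \<Longrightarrow> upper_rim_row_len D x + row_len D (Suc x) = row_len D x + 1"
  using rim_row_len_upper[of x] unfolding upper_rim_row_len_def by simp

lemma upper_rim_row_len_last: "upper_rim_row_len D (durfee D) + durfee D = row_len D (durfee D) + 1"
  using durfee_le_row_len[OF diagram, of "durfee D"] durfee_pos unfolding upper_rim_row_len_def by simp

lemma rim_start_Suc_upper:
  "1 \<le> x \<Longrightarrow> x < durfee D \<Longrightarrow> rim_start D (Suc x) = rim_start D x + upper_rim_row_len D x"
  using rim_start_Suc[of x D] unfolding upper_rim_row_len_def by simp

lemma upper_rim_end_le: "upper_rim_end D \<le> rim_start D (Suc (durfee D))"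
  unfolding upper_rim_end_def
  using rim_start_Suc[of "durfee D" D] upper_rim_row_len_le[of "durfee D"] durfee_pos by simp

lemma upper_rim_end_le_length: "upper_rim_end D \<le> length (rim_list D)"
  using upper_rim_end_le length_rim_list[OF diagram] rim_start_mono[of "Suc (durfee D)" "nrows D + 1" D]
    durfee_le_nrows by simp

lemma rim_start_lt_upper_rim_end: "i \<le> durfee D \<Longrightarrow> rim_start D i < upper_rim_end D"
  unfolding upper_rim_end_def
  using rim_start_mono[of i "durfee D" D] upper_rim_row_len_pos[of "durfee D"] durfee_pos by simp

lemma rim_list_upper_iff:
  assumes "k < length (rim_list D)"
  shows "fst (rim_list D ! k) \<le> snd (rim_list D ! k) \<longleftrightarrow> k < upper_rim_end D"
proof -
  obtain x where x: "1 \<le> x" "x \<le> nrows D" "rim_start D x \<le> k" "k < rim_start D (Suc x)"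
      and nth: "rim_list D ! k = (x, row_len D x - (k - rim_start D x))"
    using rim_list_nth_row[OF diagram assms] by blast
  have c: "k - rim_start D x < rim_row_len D x" using x rim_start_Suc[of x D] by simp
  consider "x < durfee D" | "x = durfee D" | "durfee D < x" by linarith
  then show ?thesis
  proof cases
    case 1
    have "k < rim_start D (durfee D)" using x rim_start_mono[of "Suc x" "durfee D" D] 1 by simp
    moreover have "x \<le> row_len D x - (k - rim_start D x)" using c rim_row_len_upper[OF x(1) 1] 1 by simp
    ultimately show ?thesis using nth unfolding upper_rim_end_def by simp
  next
    case 2
    have "x \<le> row_len D x - (k - rim_start D x) \<longleftrightarrow> k - rim_start D x < upper_rim_row_len D x"
      using 2 durfee_le_row_len[OF diagram, of x] x unfolding upper_rim_row_len_def by auto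
    also have "\<dots> \<longleftrightarrow> k < upper_rim_end D" unfolding upper_rim_end_def using 2 x by auto
    finally show ?thesis using nth by simp
  next
    case 3
    have "upper_rim_end D \<le> rim_start D x" using upper_rim_end_le rim_start_mono[of "Suc (durfee D)" x D] 3 by simp
    moreover have "row_len D x \<le> durfee D" using row_len_gt_durfee[OF diagram 3] .
    ultimately show ?thesis using nth x 3 by auto
  qed
qed

lemma rim_start_upper_sum:
  assumes "1 \<le> i" "i \<le> j" "j \<le> durfee D"
  shows "rim_start D j = rim_start D i + sum (upper_rim_row_len D) {i..<j}"
  using assms(2,3)
proof (induction j rule: dec_induct)
  case (step n)
  then show ?case using rim_start_Suc_upper[of n] assms(1) by simp
qed simp

lemma upper_rim_rows:
  assumes "1 \<le> i" "i \<le> j" "j \<le> durfee D"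
  shows "(\<Union>x\<in>{i..<j}. {rim_start D x..<rim_start D x + upper_rim_row_len D x}) =
    {rim_start D i..<rim_start D j}"
  using assms(2,3)
proof (induction j rule: dec_induct)
  case (step n)
  have "{i..<Suc n} = insert n {i..<n}" using step by auto
  then show ?case
    using step rim_start_Suc_upper[of n] rim_start_mono[of i n D] assms(1) by auto
qed simp

lemma last_p_segment_profile:
  assumes "1 \<le> i" "i \<le> durfee D" "rim_start D i \<le> e" "e < rim_start D i + p"
    and "rim_start D (durfee D) \<le> e"
  shows "\<exists>k L. {rim_start D i..e} \<inter> {..<upper_rim_end D} =
      (\<Union>x\<in>{i..durfee D}. {rim_start D x..<rim_start D x + k x}) \<and>
    cut_profile p (durfee D) (row_len D) k L {durfee D} i"
proof -
  define t where "t = min (e + 1) (upper_rim_end D)"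
  define k where "k x = (if x < durfee D then upper_rim_row_len D x else t - rim_start D (durfee D))" for x
  have t: "rim_start D (durfee D) < t" "t \<le> rim_start D (durfee D) + upper_rim_row_len D (durfee D)"
    using assms(5) rim_start_lt_upper_rim_end[of "durfee D"] unfolding t_def upper_rim_end_def by auto
  have start: "rim_start D (durfee D) = rim_start D i + sum k {i..<durfee D}"
    using rim_start_upper_sum[OF assms(1,2)] unfolding k_def by simp
  have "{i..durfee D} = insert (durfee D) {i..<durfee D}" using assms(2) by auto
  then have "(\<Union>x\<in>{i..durfee D}. {rim_start D x..<rim_start D x + k x}) = {rim_start D i..<t}"
    using upper_rim_rows[OF assms(1,2) order_refl] t rim_start_mono[of i "durfee D" D] assms(2)
    unfolding k_def by auto
  moreover have "{rim_start D i..e} \<inter> {..<upper_rim_end D} = {rim_start D i..<t}"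
    unfolding t_def by auto
  moreover have "cut_profile p (durfee D) (row_len D) k (t - rim_start D i) {durfee D} i"
  proof (rule cut_profile_single_block)
    show "\<And>x. i \<le> x \<Longrightarrow> x \<le> durfee D \<Longrightarrow> 1 \<le> k x"
      using upper_rim_row_len_pos assms(1) t unfolding k_def by auto
    show "\<And>x. i \<le> x \<Longrightarrow> x < durfee D \<Longrightarrow> k x + row_len D (Suc x) = row_len D x + 1"
      using upper_rim_row_len_inner assms(1) unfolding k_def by auto
    show "k (durfee D) + durfee D \<le> row_len D (durfee D) + 1"
      using upper_rim_row_len_last t unfolding k_def by simp
    show "sum k {i..durfee D} = t - rim_start D i"
      using start sum.last_plus[OF assms(2), of k] t unfolding k_def by simp
  qed (use assms t start t_def in auto)
  ultimately show ?thesis by metis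
qed

lemma inner_p_segment_profile:
  assumes ij: "1 \<le> i" "i \<le> j" "j < durfee D"
    and e: "rim_start D j \<le> e" "e < rim_start D (Suc j)" "e + 1 = rim_start D i + p"
    and later: "P = (\<Union>x\<in>{Suc j..durfee D}. {rim_start D x..<rim_start D x + k' x})"
      "cut_profile p (durfee D) (row_len D) k' L E (Suc j)"
  shows "\<exists>k. {rim_start D i..e} \<union> P = (\<Union>x\<in>{i..durfee D}. {rim_start D x..<rim_start D x + k x}) \<and>
    cut_profile p (durfee D) (row_len D) k L (insert j E) i"
proof -
  define k where "k x = (if x < j then upper_rim_row_len D x else if x = j then e + 1 - rim_start D j else k' x)"
    for x
  have start: "rim_start D j = rim_start D i + sum k {i..<j}"
    using rim_start_upper_sum[of i j] ij unfolding k_def by simp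
  have "{i..durfee D} = {i..<j} \<union> {j} \<union> {Suc j..durfee D}" using ij by auto
  then have "(\<Union>x\<in>{i..durfee D}. {rim_start D x..<rim_start D x + k x}) = {rim_start D i..e} \<union> P"
    using upper_rim_rows[of i j] ij e rim_start_mono[of i j D] unfolding later(1) k_def by auto
  moreover have "cut_profile p (durfee D) (row_len D) k L (insert j E) i"
  proof (rule cut_profile_prepend_block[OF later(2) ij])
    show "\<And>x. i \<le> x \<Longrightarrow> x \<le> j \<Longrightarrow> 1 \<le> k x"
      using upper_rim_row_len_pos ij e unfolding k_def by auto
    show "\<And>x. i \<le> x \<Longrightarrow> x < j \<Longrightarrow> k x + row_len D (Suc x) = row_len D x + 1"
      using upper_rim_row_len_inner ij unfolding k_def by auto
    show "k j + row_len D (Suc j) \<le> row_len D j + 1"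
      using e rim_start_Suc[of j D] rim_row_len_upper[of j] ij unfolding k_def by simp
    show "sum k {i..j} = p"
      using start sum.last_plus[OF ij(2), of k] e unfolding k_def by simp
  qed (simp add: k_def)
  ultimately show ?thesis by metis
qed

lemma first_p_segment:
  assumes "1 \<le> p" "1 \<le> i" "i \<le> durfee D"
  obtains e j where "rim_start D i \<le> e" "e < rim_start D i + p" "i \<le> j" "j \<le> nrows D"
    "rim_start D j \<le> e" "e < rim_start D (Suc j)" "j < durfee D \<Longrightarrow> e + 1 = rim_start D i + p"
    "pseg_idx (Suc f) p (rim_list D) (nrows D) (rim_start D i) = {rim_start D i..e} \<union>
      (if j = nrows D then {} else pseg_idx f p (rim_list D) (nrows D) (rim_start D (Suc j)))"
proof -
  define R where "R = rim_list D"
  define e where "e = min (rim_start D i + p - 1) (length R - 1)"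
  have i: "1 \<le> i" "i \<le> nrows D" using assms durfee_le_nrows by auto
  have "rim_start D i < length R"
    using rim_start_lt_upper_rim_end[of i] upper_rim_end_le_length assms unfolding R_def by simp
  then have e: "e < length R" "rim_start D i \<le> e" "e < rim_start D i + p"
    unfolding e_def using assms by auto
  then obtain j where j: "j \<le> nrows D" "rim_start D j \<le> e" "e < rim_start D (Suc j)" "fst (R ! e) = j"
    using rim_list_nth_row[OF diagram] unfolding R_def by (metis fst_conv)
  have "i \<le> j" using rim_start_mono[of "Suc j" i D] j e by (meson not_less_eq_eq order.trans not_le)
  moreover have "e + 1 = rim_start D i + p" if "j < durfee D"
  proof -
    have "e + 1 < upper_rim_end D"
      using j(3) that rim_start_mono[of "Suc j" "durfee D" D] rim_start_lt_upper_rim_end[of "durfee D"] by simp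
    then show ?thesis using e upper_rim_end_le_length assms unfolding e_def R_def by auto
  qed
  moreover have "pseg_idx (Suc f) p R (nrows D) (rim_start D i) = {rim_start D i..e} \<union>
      (if j = nrows D then {} else pseg_idx f p R (nrows D) (rim_start D (Suc j)))"
    using p_segments_unfold[OF diagram i, where p=p and f=f] j(4) unfolding R_def e_def by simp
  ultimately show ?thesis using that e j unfolding R_def by blast
qed

lemma p_segments_upper:
  assumes "1 \<le> p"
  shows "1 \<le> i \<Longrightarrow> i \<le> durfee D \<Longrightarrow> durfee D - i < f \<Longrightarrow>
    \<exists>k E L. pseg_idx f p (rim_list D) (nrows D) (rim_start D i) \<inter> {..<upper_rim_end D} =
        (\<Union>x\<in>{i..durfee D}. {rim_start D x..<rim_start D x + k x}) \<and>
      cut_profile p (durfee D) (row_len D) k L E i"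
proof (induction f arbitrary: i)
  case (Suc f)
  obtain e j where seg: "rim_start D i \<le> e" "e < rim_start D i + p" "i \<le> j" "j \<le> nrows D"
    "rim_start D j \<le> e" "e < rim_start D (Suc j)" "j < durfee D \<Longrightarrow> e + 1 = rim_start D i + p"
    and unfold: "pseg_idx (Suc f) p (rim_list D) (nrows D) (rim_start D i) = {rim_start D i..e} \<union>
      (if j = nrows D then {} else pseg_idx f p (rim_list D) (nrows D) (rim_start D (Suc j)))"
    using first_p_segment[OF assms Suc.prems(1,2), where f=f] by blast
  define rest where "rest = (if j = nrows D then {} else pseg_idx f p (rim_list D) (nrows D) (rim_start D (Suc j)))"
  show ?case
  proof (cases "j < durfee D")
    case True
    have "durfee D - Suc j < f" "j \<noteq> nrows D" using Suc.prems(3) seg(3) True durfee_le_nrows by auto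
    then obtain k' E L where k': "rest \<inter> {..<upper_rim_end D} =
        (\<Union>x\<in>{Suc j..durfee D}. {rim_start D x..<rim_start D x + k' x})"
        "cut_profile p (durfee D) (row_len D) k' L E (Suc j)"
      using Suc.IH[of "Suc j"] True unfolding rest_def by auto
    have "e < upper_rim_end D"
      using seg(6) True rim_start_mono[of "Suc j" "durfee D" D] rim_start_lt_upper_rim_end[of "durfee D"] by simp
    then have split: "pseg_idx (Suc f) p (rim_list D) (nrows D) (rim_start D i) \<inter> {..<upper_rim_end D} =
        {rim_start D i..e} \<union> rest \<inter> {..<upper_rim_end D}"
      unfolding unfold rest_def[symmetric] by auto
    obtain k where "{rim_start D i..e} \<union> rest \<inter> {..<upper_rim_end D} =
        (\<Union>x\<in>{i..durfee D}. {rim_start D x..<rim_start D x + k x})"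
        "cut_profile p (durfee D) (row_len D) k L (insert j E) i"
      using inner_p_segment_profile[OF Suc.prems(1) seg(3) True seg(5,6) seg(7)[OF True] k'] by blast
    then show ?thesis using split by metis
  next
    case False
    have "rest \<subseteq> {rim_start D (Suc j)..}"
    proof (cases "j = nrows D")
      case False
      then have "Suc j \<le> nrows D" using seg(4) by simp
      then show ?thesis using p_segments_subset[OF diagram assms, of "Suc j" f] unfolding rest_def by auto
    qed (simp add: rest_def)
    moreover have "upper_rim_end D \<le> rim_start D (Suc j)"
      using upper_rim_end_le rim_start_mono[of "Suc (durfee D)" "Suc j" D] False by simp
    ultimately have "pseg_idx (Suc f) p (rim_list D) (nrows D) (rim_start D i) \<inter> {..<upper_rim_end D} =
        {rim_start D i..e} \<inter> {..<upper_rim_end D}"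
      unfolding unfold rest_def[symmetric] by auto
    moreover obtain k L where "{rim_start D i..e} \<inter> {..<upper_rim_end D} =
        (\<Union>x\<in>{i..durfee D}. {rim_start D x..<rim_start D x + k x})"
        "cut_profile p (durfee D) (row_len D) k L {durfee D} i"
      using last_p_segment_profile[OF Suc.prems(1,2) seg(1,2)] seg(5) rim_start_mono[of "durfee D" j D] False
      by force
    ultimately show ?thesis by metis
  qed
qed simp

lemma U_set_eq_image:
  assumes "1 \<le> p"
  shows "U_set p D = (\<lambda>k. rim_list D ! k) `
    (pseg_idx (nrows D) p (rim_list D) (nrows D) (rim_start D 1) \<inter> {..<upper_rim_end D})"
proof -
  define P where "P = pseg_idx (nrows D) p (rim_list D) (nrows D) (rim_start D 1)"
  have "P \<subseteq> {0..<length (rim_list D)}"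
    using p_segments_subset[OF diagram assms order_refl] durfee_pos durfee_le_nrows unfolding P_def by simp
  then have "q \<in> P \<Longrightarrow> fst (rim_list D ! q) \<le> snd (rim_list D ! q) \<longleftrightarrow> q < upper_rim_end D" for q
    using rim_list_upper_iff by auto
  moreover have "U_set p D = {z \<in> (\<lambda>k. rim_list D ! k) ` P. fst z \<le> snd z}"
    unfolding U_set_def p_rim_def P_def by (auto simp: Let_def; metis fst_conv snd_conv)
  ultimately show ?thesis unfolding P_def by auto
qed

lemma image_upper_blocks:
  assumes "cut_profile p (durfee D) (row_len D) k L E 1"
  shows "(\<lambda>k. rim_list D ! k) ` (\<Union>x\<in>{1..durfee D}. {rim_start D x..<rim_start D x + k x}) =
    {(x,y). 1 \<le> x \<and> x \<le> durfee D \<and> row_len D x - k x < y \<and> y \<le> row_len D x}"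
proof -
  interpret cut_profile p "durfee D" "row_len D" k L E 1 by (rule assms)
  have "k x \<le> upper_rim_row_len D x" if "1 \<le> x" "x \<le> durfee D" for x
    using k_last upper_rim_row_len_last k_step[of x] upper_rim_row_len_inner[of x] that
    by (cases "x = durfee D") auto
  then have nth: "rim_list D ! (rim_start D x + c) = (x, row_len D x - c)"
    if "1 \<le> x" "x \<le> durfee D" "c < k x" for x c
    using rim_list_nth[OF diagram, of x c] upper_rim_row_len_le[of x] durfee_le_nrows that by fastforce
  show ?thesis
  proof (intro equalityI subsetI)
    fix z assume "z \<in> (\<lambda>k. rim_list D ! k) ` (\<Union>x\<in>{1..durfee D}. {rim_start D x..<rim_start D x + k x})"
    then obtain x q where "1 \<le> x" "x \<le> durfee D" "rim_start D x \<le> q" "q < rim_start D x + k x"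
        "z = rim_list D ! q"
      by auto
    then obtain c where "1 \<le> x" "x \<le> durfee D" "c < k x" "z = rim_list D ! (rim_start D x + c)"
      by (metis add_less_cancel_left le_add_diff_inverse)
    then show "z \<in> {(x,y). 1 \<le> x \<and> x \<le> durfee D \<and> row_len D x - k x < y \<and> y \<le> row_len D x}"
      using nth k_le_lam[of x] by auto
  next
    fix z assume "z \<in> {(x,y). 1 \<le> x \<and> x \<le> durfee D \<and> row_len D x - k x < y \<and> y \<le> row_len D x}"
    then obtain x y where xy: "z = (x,y)" "1 \<le> x" "x \<le> durfee D" "row_len D x - k x < y" "y \<le> row_len D x"
      by auto
    then have "z = rim_list D ! (rim_start D x + (row_len D x - y))" "row_len D x - y < k x"
      using nth[of x "row_len D x - y"] k_le_lam[of x] by auto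
    then show "z \<in> (\<lambda>k. rim_list D ! k) ` (\<Union>x\<in>{1..durfee D}. {rim_start D x..<rim_start D x + k x})"
      using xy(2,3) by force
  qed
qed

end

section \<open>Removing the p-rim*\<close>

lemma sym_rim_star: "sym (rim_star p D)"
  unfolding rim_star_def by (rule symI) auto

locale p_rim_profile = self_conj_diagram +
  fixes p :: nat and k :: "nat \<Rightarrow> nat" and L :: nat and E :: "nat set"
  assumes p_pos: "1 \<le> p"
    and profile: "cut_profile p (durfee D) (row_len D) k L E 1"
    and U_set_eq: "U_set p D = {(x,y). 1 \<le> x \<and> x \<le> durfee D \<and> row_len D x - k x < y \<and> y \<le> row_len D x}"
begin

sublocale cut_profile p "durfee D" "row_len D" k L E 1
  by (rule profile)

definition stripped_row :: "nat \<Rightarrow> nat" where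
  "stripped_row x = row_len D x - k x"

text \<open>Holds iff the corner \<open>(durfee D, durfee D)\<close> belongs to the p-rim*.\<close>
definition diag_removed :: bool where
  "diag_removed \<longleftrightarrow> stripped_row (durfee D) < durfee D"

lemma stripped_row_ge: "1 \<le> x \<Longrightarrow> x \<le> durfee D \<Longrightarrow> x \<le> stripped_row x + 1"
  using k_last rest_antimono[of x "durfee D"] unfolding stripped_row_def by simp

lemma stripped_row_ge_inner: "1 \<le> x \<Longrightarrow> x < durfee D \<Longrightarrow> x \<le> stripped_row x"
  using k_step[of x] rim_row_len_upper(3)[of x] k_le_lam[of x] unfolding stripped_row_def by simp

lemma stripped_row_le: "stripped_row x \<le> row_len D x"
  unfolding stripped_row_def by simp

lemma U_set_mem: "(a,b) \<in> U_set p D \<longleftrightarrow> 1 \<le> a \<and> a \<le> durfee D \<and> stripped_row a < b \<and> b \<le> row_len D a"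
  unfolding U_set_eq stripped_row_def by simp

lemma remove_rim_star: "D - rim_star p D = sym_diagram (durfee D) stripped_row"
proof (rule sym_eq_on_upper_half)
  show "sym (D - rim_star p D)" using symmetric sym_rim_star[of p D] unfolding sym_def by blast
  show "sym (sym_diagram (durfee D) stripped_row)" by (rule sym_sym_diagram)
  fix a b :: nat assume "a \<le> b"
  have "(a,b) \<in> rim_star p D \<longleftrightarrow> (a,b) \<in> U_set p D"
    using \<open>a \<le> b\<close> unfolding rim_star_def U_set_def by auto
  moreover have "(a,b) \<in> D \<longleftrightarrow> 1 \<le> a \<and> a \<le> durfee D \<and> b \<le> row_len D a"
    using eq_sym_diagram sym_diagram_upper_iff[OF \<open>a \<le> b\<close>] by blast
  ultimately show "(a,b) \<in> D - rim_star p D \<longleftrightarrow> (a,b) \<in> sym_diagram (durfee D) stripped_row"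
    using sym_diagram_upper_iff[OF \<open>a \<le> b\<close>] U_set_mem stripped_row_le[of a] by auto
qed

lemma is_diagram_remove: "is_diagram (D - rim_star p D)"
  unfolding remove_rim_star stripped_row_def by (rule is_diagram_sym_diagram) (rule rest_antimono)

lemma sym_remove: "sym (D - rim_star p D)"
  unfolding remove_rim_star by (rule sym_sym_diagram)

lemma durfee_remove: "durfee (D - rim_star p D) + of_bool diag_removed = durfee D"
proof -
  have "{a. (a,a) \<in> D - rim_star p D} = {a. 1 \<le> a \<and> a \<le> durfee D \<and> a \<le> stripped_row a}"
    unfolding remove_rim_star using sym_diagram_upper_iff[of _ _ "durfee D" stripped_row] by auto
  also have "\<dots> = {1..durfee D - of_bool diag_removed}"
  proof (rule set_eqI)
    fix a
    show "a \<in> {a. 1 \<le> a \<and> a \<le> durfee D \<and> a \<le> stripped_row a} \<longleftrightarrow> a \<in> {1..durfee D - of_bool diag_removed}"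
      using stripped_row_ge_inner[of a] durfee_pos unfolding diag_removed_def by (cases "a < durfee D") auto
  qed
  finally show ?thesis using durfee_pos unfolding durfee_def by simp
qed

lemma upper_row_remove:
  "1 \<le> x \<Longrightarrow> x \<le> durfee D \<Longrightarrow> card {y. x \<le> y \<and> (x,y) \<in> D - rim_star p D} + x = stripped_row x + 1"
  unfolding remove_rim_star using sym_diagram_upper_row[of x "durfee D" stripped_row] stripped_row_ge[of x] by simp

lemma U_set_Sigma: "U_set p D = (SIGMA x:{1..durfee D}. {stripped_row x<..row_len D x})"
  unfolding U_set_eq stripped_row_def by auto

lemma card_U_set: "card (U_set p D) = sum k {1..durfee D}"
  unfolding U_set_Sigma using k_le_lam by (simp add: stripped_row_def)

lemma card_rim_star: "card (rim_star p D) + of_bool diag_removed = 2 * card (U_set p D)"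
proof -
  let ?U = "U_set p D"
  have fin: "finite ?U" unfolding U_set_Sigma by simp
  have "(a,b) \<in> ?U \<and> (b,a) \<in> ?U \<longleftrightarrow> diag_removed \<and> a = durfee D \<and> b = durfee D" for a b
  proof
    assume "(a,b) \<in> ?U \<and> (b,a) \<in> ?U"
    then have u: "1 \<le> a" "a \<le> durfee D" "stripped_row a < b" "b \<le> durfee D" "stripped_row b < a"
      using U_set_mem by auto
    then have "a = b" using stripped_row_ge[of a] stripped_row_ge[of b] by linarith
    moreover have "a = durfee D" using stripped_row_ge_inner[of a] u \<open>a = b\<close> by fastforce
    ultimately show "diag_removed \<and> a = durfee D \<and> b = durfee D"
      using u unfolding diag_removed_def by simp
  next
    assume "diag_removed \<and> a = durfee D \<and> b = durfee D"
    then show "(a,b) \<in> ?U \<and> (b,a) \<in> ?U"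
      using U_set_mem durfee_le_row_len[OF diagram, of "durfee D"] durfee_pos
      unfolding diag_removed_def by auto
  qed
  then have "?U \<inter> ?U\<inverse> = (if diag_removed then {(durfee D, durfee D)} else {})" by auto
  then have "card (?U \<inter> ?U\<inverse>) = of_bool diag_removed" by simp
  moreover have "card ?U + card (?U\<inverse>) = card (?U \<union> ?U\<inverse>) + card (?U \<inter> ?U\<inverse>)"
    using fin by (intro card_Un_Int) simp_all
  moreover have "rim_star p D = ?U \<union> ?U\<inverse>" unfolding rim_star_def by auto
  ultimately show ?thesis by simp
qed

lemma card_remove_less: "card (D - rim_star p D) < card D"
proof -
  have "(1, row_len D 1) \<in> U_set p D"
    using U_set_mem k_pos[of 1] k_le_lam[of 1] durfee_pos unfolding stripped_row_def by simp
  moreover have "U_set p D \<subseteq> D" using U_set_mem is_diagram_mem_iff[OF diagram] by auto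
  ultimately show ?thesis
    using is_diagram_finite[OF diagram] unfolding rim_star_def by (intro psubset_card_mono) auto
qed

end

lemma (in self_conj_diagram) ex_p_rim_profile:
  assumes "1 \<le> p" shows "\<exists>k L E. p_rim_profile D p k L E"
proof -
  obtain k E L where
    "pseg_idx (nrows D) p (rim_list D) (nrows D) (rim_start D 1) \<inter> {..<upper_rim_end D} =
      (\<Union>x\<in>{1..durfee D}. {rim_start D x..<rim_start D x + k x})"
    and profile: "cut_profile p (durfee D) (row_len D) k L E 1"
    using p_segments_upper[OF assms order_refl durfee_pos, of "nrows D"] durfee_le_nrows durfee_pos
    by (metis diff_less less_le_trans zero_less_one)
  then have "U_set p D = {(x,y). 1 \<le> x \<and> x \<le> durfee D \<and> row_len D x - k x < y \<and> y \<le> row_len D x}"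
    using U_set_eq_image[OF assms] image_upper_blocks[OF profile] by simp
  then have "p_rim_profile D p k L E"
    using assms profile by (intro p_rim_profile.intro self_conj_diagram_axioms p_rim_profile_axioms.intro)
  then show ?thesis by blast
qed

section \<open>Injectivity of the BG-symbol\<close>

lemma last_block_eq_mod:
  fixes r p c L :: nat
  assumes "r + p = p * c + L" "1 \<le> L" "L \<le> p"
  shows "L = (r + p - 1) mod p + 1"
proof -
  have "r + p - 1 = (L - 1) + p * c" using assms by simp
  then have "(r + p - 1) mod p = (L - 1) mod p" by simp
  also have "\<dots> = L - 1" using assms by simp
  finally show ?thesis using assms by simp
qed

lemma remove_rim_star_inj:
  assumes P: "p_rim_profile D p k L E" and Q: "p_rim_profile D' p k' L' E'"
    and card_rim_star: "card (rim_star p D) = card (rim_star p D')"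
    and card_U_set: "card (U_set p D) = card (U_set p D')"
    and removed: "D - rim_star p D = D' - rim_star p D'"
  shows "D = D'"
proof -
  interpret P: p_rim_profile D p k L E by (rule P)
  interpret Q: p_rim_profile D' p k' L' E' by (rule Q)
  have "of_bool P.diag_removed = (of_bool Q.diag_removed :: nat)"
    using P.card_rim_star Q.card_rim_star card_rim_star card_U_set by simp
  then have "P.diag_removed = Q.diag_removed" by (simp add: of_bool_eq_iff)
  then have d: "durfee D = durfee D'" using P.durfee_remove Q.durfee_remove removed by simp
  have stripped: "P.stripped_row x = Q.stripped_row x" if "1 \<le> x" "x \<le> durfee D" for x
    using P.upper_row_remove[OF that] Q.upper_row_remove[of x] that removed d by simp
  have "L = L'"
    using last_block_eq_mod[OF P.sum_k P.last_block_pos P.last_block_le]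
      last_block_eq_mod[OF Q.sum_k Q.last_block_pos Q.last_block_le]
      P.card_U_set Q.card_U_set card_U_set d by simp
  then have "row_len D x = row_len D' x" if "1 \<le> x" "x \<le> durfee D" for x
    using cut_profile_unique[OF P.profile, of "row_len D'" k' E'] Q.profile stripped that d
    unfolding P.stripped_row_def Q.stripped_row_def by simp
  then show ?thesis
    using P.eq_sym_diagram Q.eq_sym_diagram sym_diagram_cong[of "durfee D" "row_len D" "row_len D'"] d by metis
qed

lemma bg_aux_eq_Nil_iff: "finite D \<Longrightarrow> card D \<le> f \<Longrightarrow> bg_aux f p D = [] \<longleftrightarrow> D = {}"
  by (cases f) auto

lemma bg_aux_inj:
  assumes "1 \<le> p"
  shows "is_diagram D \<Longrightarrow> sym D \<Longrightarrow> is_diagram D' \<Longrightarrow> sym D' \<Longrightarrow> card D \<le> f \<Longrightarrow> card D' \<le> f' \<Longrightarrow>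
    bg_aux f p D = bg_aux f' p D' \<Longrightarrow> D = D'"
proof (induction f arbitrary: D D' f')
  case 0
  then have "D = {}" using is_diagram_finite by auto
  moreover have "D' = {}"
    using bg_aux_eq_Nil_iff[OF is_diagram_finite[OF 0(3)] 0(6)] 0(7) by (simp add: eq_commute)
  ultimately show ?case by simp
next
  case (Suc f)
  show ?case
  proof (cases "D = {} \<or> D' = {}")
    case True
    have "bg_aux (Suc f) p D = [] \<longleftrightarrow> D = {}" "bg_aux f' p D' = [] \<longleftrightarrow> D' = {}"
      using bg_aux_eq_Nil_iff is_diagram_finite Suc.prems(1,3,5,6) by blast+
    then show ?thesis using True Suc.prems(7) by auto
  next
    case False
    then have "card D' \<noteq> 0" using Suc.prems(3) is_diagram_finite by auto
    then obtain f0 where f': "f' = Suc f0" using Suc.prems(6) by (cases f') auto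
    have "self_conj_diagram D" "self_conj_diagram D'"
      using Suc.prems(1-4) False by (auto intro: self_conj_diagram.intro)
    then obtain k L E k' L' E' where P: "p_rim_profile D p k L E" and Q: "p_rim_profile D' p k' L' E'"
      using self_conj_diagram.ex_p_rim_profile assms by metis
    have eq: "card (rim_star p D) = card (rim_star p D')" "card (U_set p D) = card (U_set p D')"
      "bg_aux f p (D - rim_star p D) = bg_aux f0 p (D' - rim_star p D')"
      using Suc.prems(7) False unfolding f' by simp_all
    have "D - rim_star p D = D' - rim_star p D'"
      using Suc.IH[OF _ _ _ _ _ _ eq(3)] p_rim_profile.is_diagram_remove[OF P] p_rim_profile.sym_remove[OF P]
        p_rim_profile.is_diagram_remove[OF Q] p_rim_profile.sym_remove[OF Q]
        p_rim_profile.card_remove_less[OF P] p_rim_profile.card_remove_less[OF Q] Suc.prems(5,6) f'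
      by simp
    then show ?thesis using remove_rim_star_inj[OF P Q eq(1,2)] by simp
  qed
qed

theorem proposition3p13:
  fixes p :: nat and lam mu :: "nat list"
  assumes "prime p" and "odd p"
    and "is_partition lam" and "is_partition mu"
    and "self_conjugate lam" and "self_conjugate mu"
    and "lam \<noteq> []" and "mu \<noteq> []"
    and "BG_symbol p lam = BG_symbol p mu"
  shows "lam = mu"
proof -
  have "1 \<le> p" using assms(1) prime_ge_1_nat by blast
  then have "diagram lam = diagram mu"
    using bg_aux_inj is_diagram_diagram[OF assms(3)] is_diagram_diagram[OF assms(4)]
      sym_diagram_of_self_conjugate[OF assms(5)] sym_diagram_of_self_conjugate[OF assms(6)] assms(9)
    unfolding BG_symbol_def by (meson order_refl)
  then show ?thesis using diagram_inj assms(3,4) by blast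
qed

end
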